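(* Let $R=\bigoplus_{s\in S}R_s$ be a strongly graded pseudo-unitary $S$-graded ring inducing $S$. Then $R$ is graded von Neumann regular if and only if: (a) for every nonzero $x\in H_R$ there exists $y\in H_R$ such that $xy$ is a nonzero homogeneous element whose degree is an idempotent of $S$; and (b) $R_e$ is a von Neumann regular ring for every idempotent $e\in S$.
   Context: Rings are associative, not necessarily unital. $S$-graded ring inducing $S$: $S$ a partial groupoid, $R=\bigoplus_{s\in S}R_s$, $R_sR_t\subseteq R_{st}$ when $st$ defined, $R_sR_t\ne0$ implies $st$ defined. Convention: $0\in S$, $R_0=0$, $S\setminus\{0\}=\{s:R_s\ne0\}$, undefined products set to $0$, $0$ absorbing. $H_R=\bigcup_sR_s$; $\deg(x)$ of nonzero homogeneous $x$ is the unique $s$ with $x\in R_s$. $R_sR_t$ denotes the additive subgroup generated by products. $R$ is strongly graded if $R_sR_t=R_{st}$ for all $s,t\in S$. $S$ cancellative: $0\ne su=tu$ or $0\ne us=ut$ implies $s=t$. $I(S)$: idempotents of $S$. $R$ is pseudo-unitary if $S$ is cancellative, for every $e\in I(S)$ the ring $R_e$ has a unity $1_e$, and for every $x\in H_R$ there exist $e,f\in I(S)$ with $1_ex=x=x1_f$. $R$ is graded von Neumann regular if $x\in xRx$ for all $x\in H_R$. *)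

theory Defs
  imports Main
begin

inductive_set addsub_prod :: "'a::ring set \<Rightarrow> 'a set \<Rightarrow> 'a set"
  for A B where
  zero: "0 \<in> addsub_prod A B"
| prod: "a \<in> A \<Longrightarrow> b \<in> B \<Longrightarrow> a * b \<in> addsub_prod A B"
| diff: "x \<in> addsub_prod A B \<Longrightarrow> y \<in> addsub_prod A B \<Longrightarrow> x - y \<in> addsub_prod A B"

text \<open>The partial groupoid S is a carrier set with an operation mul, in which undefined
products are set to the absorbing element z (the "0" of S).
Rs s is the homogeneous component of degree s; the ring R is the whole type.\<close>

definition graded_inducing ::
  "'s set \<Rightarrow> ('s \<Rightarrow> 's \<Rightarrow> 's) \<Rightarrow> 's \<Rightarrow> ('s \<Rightarrow> 'a::ring set) \<Rightarrow> bool" where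
  "graded_inducing S mul z Rs \<longleftrightarrow>
     z \<in> S \<and>
     (\<forall>s\<in>S. \<forall>t\<in>S. mul s t \<in> S) \<and>
     (\<forall>s\<in>S. mul z s = z \<and> mul s z = z) \<and>
     (\<forall>s\<in>S. 0 \<in> Rs s \<and> (\<forall>x\<in>Rs s. \<forall>y\<in>Rs s. x - y \<in> Rs s)) \<and>
     Rs z = {0} \<and>
     (\<forall>s\<in>S. s \<noteq> z \<longleftrightarrow> Rs s \<noteq> {0}) \<and>
     (\<forall>x::'a. \<exists>!f::'s \<Rightarrow> 'a. (\<forall>s. s \<notin> S \<longrightarrow> f s = 0) \<and> (\<forall>s\<in>S. f s \<in> Rs s) \<and>
          finite {s. f s \<noteq> 0} \<and> x = (\<Sum>s\<in>{s. f s \<noteq> 0}. f s)) \<and>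
     (\<forall>s\<in>S. \<forall>t\<in>S. \<forall>x\<in>Rs s. \<forall>y\<in>Rs t. x * y \<in> Rs (mul s t))"

definition homog :: "'s set \<Rightarrow> ('s \<Rightarrow> 'a set) \<Rightarrow> 'a set" where
  "homog S Rs = (\<Union>s\<in>S. Rs s)"

definition deg :: "'s set \<Rightarrow> ('s \<Rightarrow> 'a set) \<Rightarrow> 'a \<Rightarrow> 's" where
  "deg S Rs x = (THE s. s \<in> S \<and> x \<in> Rs s)"

definition idems :: "'s set \<Rightarrow> ('s \<Rightarrow> 's \<Rightarrow> 's) \<Rightarrow> 's set" where
  "idems S mul = {e\<in>S. mul e e = e}"

definition strongly_graded ::
  "'s set \<Rightarrow> ('s \<Rightarrow> 's \<Rightarrow> 's) \<Rightarrow> ('s \<Rightarrow> 'a::ring set) \<Rightarrow> bool" where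
  "strongly_graded S mul Rs \<longleftrightarrow> (\<forall>s\<in>S. \<forall>t\<in>S. addsub_prod (Rs s) (Rs t) = Rs (mul s t))"

definition cancellative :: "'s set \<Rightarrow> ('s \<Rightarrow> 's \<Rightarrow> 's) \<Rightarrow> 's \<Rightarrow> bool" where
  "cancellative S mul z \<longleftrightarrow>
     (\<forall>s\<in>S. \<forall>t\<in>S. \<forall>u\<in>S.
        ((mul s u \<noteq> z \<and> mul s u = mul t u) \<or> (mul u s \<noteq> z \<and> mul u s = mul u t)) \<longrightarrow> s = t)"

definition is_unity :: "'a::ring set \<Rightarrow> 'a \<Rightarrow> bool" where
  "is_unity A u \<longleftrightarrow> u \<in> A \<and> (\<forall>x\<in>A. u * x = x \<and> x * u = x)"

definition pseudo_unitary ::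
  "'s set \<Rightarrow> ('s \<Rightarrow> 's \<Rightarrow> 's) \<Rightarrow> 's \<Rightarrow> ('s \<Rightarrow> 'a::ring set) \<Rightarrow> bool" where
  "pseudo_unitary S mul z Rs \<longleftrightarrow>
     cancellative S mul z \<and>
     (\<forall>e\<in>idems S mul. \<exists>u. is_unity (Rs e) u) \<and>
     (\<forall>x\<in>homog S Rs. \<exists>e\<in>idems S mul. \<exists>f\<in>idems S mul. \<exists>u v.
        is_unity (Rs e) u \<and> is_unity (Rs f) v \<and> u * x = x \<and> x * v = x)"

definition graded_vnr :: "'s set \<Rightarrow> ('s \<Rightarrow> 'a::ring set) \<Rightarrow> bool" where
  "graded_vnr S Rs \<longleftrightarrow> (\<forall>x\<in>homog S Rs. \<exists>r. x = x * r * x)"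

definition vnr_subring :: "'a::ring set \<Rightarrow> bool" where
  "vnr_subring A \<longleftrightarrow> (\<forall>x\<in>A. \<exists>r\<in>A. x = x * r * x)"

end

theory Submission
  imports Defs
begin

text \<open>
  If \<open>x \<in> R\<^sub>s\<close> is nonzero and \<open>x = x r x\<close>, only the terms \<open>x r\<^sub>t x\<close> with \<open>(st)s = s\<close>
  survive in the degree-\<open>s\<close> component. A left unity \<open>1\<^sub>e\<close> of \<open>x\<close> forces \<open>es = s\<close>, so
  cancellation gives \<open>st = e\<close> for such \<open>t\<close>: this is (a); when \<open>s = e\<close> is idempotent it gives
  \<open>t = e\<close>, so \<open>r\<close> may be replaced by \<open>r\<^sub>e \<in> R\<^sub>e\<close>: this is (b).
  Conversely, let \<open>xy\<close> have idempotent degree \<open>e = st\<close> and \<open>1\<^sub>e x = x = x 1\<^sub>f\<close>. Writing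
  \<open>1\<^sub>e \<in> R\<^sub>s R\<^sub>t\<close> as a sum of products gives \<open>s(ts) = s = sf\<close>, hence \<open>ts = f\<close>; so
  \<open>1\<^sub>f \<in> R\<^sub>t R\<^sub>s\<close> and \<open>x = x 1\<^sub>f\<close> is a sum of terms \<open>(xa)b\<close> with \<open>xa \<in> R\<^sub>e\<close>. As \<open>R\<^sub>e\<close> is
  regular, some idempotent \<open>\<epsilon> \<in> xR\<close> fixes every \<open>xa\<close>, hence \<open>x\<close>, and \<open>\<epsilon> = xr\<close> gives \<open>x = xrx\<close>.
\<close>

definition is_subring :: "'a::ring set \<Rightarrow> bool" where
  "is_subring A \<longleftrightarrow> 0 \<in> A \<and> (\<forall>a\<in>A. \<forall>b\<in>A. a - b \<in> A \<and> a * b \<in> A)"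

definition is_right_ideal :: "'a::ring set \<Rightarrow> bool" where
  "is_right_ideal I \<longleftrightarrow> 0 \<in> I \<and> (\<forall>a\<in>I. \<forall>b\<in>I. a - b \<in> I) \<and> (\<forall>a\<in>I. \<forall>r. a * r \<in> I)"

lemma diff_closed_add:
  fixes a b :: "'a::ring"
  assumes "0 \<in> A" "\<forall>a\<in>A. \<forall>b\<in>A. a - b \<in> A" "a \<in> A" "b \<in> A"
  shows "a + b \<in> A"
  using assms by (metis diff_0 diff_minus_eq_add)

lemma is_subringD:
  assumes "is_subring A" "a \<in> A" "b \<in> A"
  shows "a - b \<in> A" "a * b \<in> A" "a + b \<in> A"
  using assms diff_closed_add[of A a b] by (auto simp: is_subring_def)

lemma is_right_idealD:
  assumes "is_right_ideal I" "a \<in> I" "b \<in> I"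
  shows "a - b \<in> I" "a * r \<in> I" "a + b \<in> I"
  using assms diff_closed_add[of I a b] by (auto simp: is_right_ideal_def)

lemma is_right_ideal_principal: "is_right_ideal (range ((*) x))"
proof -
  have "x * a - x * b = x * (a - b)" "x * a * r = x * (a * r)" for a b r
    by (simp_all add: right_diff_distrib mult.assoc)
  moreover have "0 \<in> range ((*) x)" using rangeI[of "(*) x" 0] by simp
  ultimately show ?thesis
    unfolding is_right_ideal_def by (auto intro: rangeI)
qed

text \<open>\<open>e1\<close> annihilates \<open>b\<close> on the left and \<open>f = bw\<close> is an idempotent with \<open>fb = b\<close>; then
  \<open>g\<close> is an idempotent fixing \<open>e1\<close> and \<open>f\<close>, hence also \<open>e2 = e1 e2 + b\<close>.\<close>
lemma idempotent_join:
  fixes e1 e2 :: "'a::ring"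
  assumes i1: "e1 * e1 = e1" and i2: "e2 * e2 = e2"
    and b: "b = e2 - e1 * e2" and w: "b = b * w * b"
    and f: "f = b * w" and g: "g = e1 + f - f * e1"
  shows "g * g = g" "g * e1 = e1" "g * e2 = e2"
proof -
  have ff: "f * f = f" using w f by (metis mult.assoc)
  have "e1 * b = 0" using b i1 by (simp add: right_diff_distrib mult.assoc[symmetric])
  then have e1f: "e1 * f = 0" using f by (metis mult.assoc mult_zero_left)
  show ge1: "g * e1 = e1"
    using g i1 by (simp add: left_diff_distrib distrib_right mult.assoc)
  have gf: "g * f = f"
    using g e1f ff by (simp add: left_diff_distrib distrib_right mult.assoc)
  show "g * g = g"
    using g ge1 gf by (simp add: right_diff_distrib distrib_left mult.assoc[symmetric])
  have gb: "g * b = b" using w f gf by (metis mult.assoc)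
  have "e2 = e1 * e2 + b" using b by simp
  then have "g * e2 = g * e1 * e2 + g * b" by (metis distrib_left mult.assoc)
  then show "g * e2 = e2" using ge1 gb b by simp
qed

lemma vnr_idempotent_join:
  assumes A: "is_subring A" "vnr_subring A" and I: "is_right_ideal I"
    and e1: "e1 \<in> A \<inter> I" "e1 * e1 = e1" and e2: "e2 \<in> A \<inter> I" "e2 * e2 = e2"
  obtains g where "g \<in> A \<inter> I" "g * g = g" "g * e1 = e1" "g * e2 = e2"
proof -
  define b where "b = e2 - e1 * e2"
  have b_in: "b \<in> A \<inter> I"
    using e1 e2 A I by (auto simp: b_def intro: is_subringD is_right_idealD)
  then obtain w where w: "w \<in> A" "b = b * w * b"
    using A(2) unfolding vnr_subring_def by blast
  define f where "f = b * w"
  define g where "g = e1 + f - f * e1"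
  have "f \<in> A \<inter> I" using b_in w A I by (auto simp: f_def intro: is_subringD is_right_idealD)
  then have "g \<in> A \<inter> I" using e1 A I by (auto simp: g_def intro: is_subringD is_right_idealD)
  with idempotent_join[OF e1(2) e2(2) b_def w(2) f_def g_def] show thesis by (intro that)
qed

text \<open>In a regular ring every finitely generated right ideal is generated by an idempotent;
  here the generators are the left factors of the products making up \<open>q\<close>.\<close>
lemma vnr_idempotent_left_unit:
  assumes A: "is_subring A" "vnr_subring A" and I: "is_right_ideal I"
    and B: "B \<subseteq> A \<inter> I" and q: "q \<in> addsub_prod B C"
  shows "\<exists>\<epsilon>\<in>A \<inter> I. \<epsilon> * \<epsilon> = \<epsilon> \<and> \<epsilon> * q = q"
  using q
proof (induction rule: addsub_prod.induct)
  case zero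
  have "0 \<in> A \<inter> I" using A I by (simp add: is_subring_def is_right_ideal_def)
  then show ?case by (metis mult_zero_left)
next
  case (prod b c)
  then have b: "b \<in> A \<inter> I" using B by blast
  then obtain w where w: "w \<in> A" "b = b * w * b"
    using A(2) unfolding vnr_subring_def by blast
  have "b * w \<in> A \<inter> I" using b w A I by (auto intro: is_subringD is_right_idealD)
  moreover have "b * w * (b * w) = b * w" "b * w * (b * c) = b * c"
    using w(2) by (metis mult.assoc)+
  ultimately show ?case by blast
next
  case (diff q1 q2)
  then obtain e1 e2 where e1: "e1 \<in> A \<inter> I" "e1 * e1 = e1" "e1 * q1 = q1"
    and e2: "e2 \<in> A \<inter> I" "e2 * e2 = e2" "e2 * q2 = q2"
    by blast
  obtain g where g: "g \<in> A \<inter> I" "g * g = g" "g * e1 = e1" "g * e2 = e2"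
    using vnr_idempotent_join[OF A I e1(1,2) e2(1,2)] by blast
  have "g * q1 = q1" using g(3) e1(3) by (metis mult.assoc)
  moreover have "g * q2 = q2" using g(4) e2(3) by (metis mult.assoc)
  ultimately have "g * (q1 - q2) = q1 - q2" by (simp add: right_diff_distrib)
  then show ?case using g(1,2) by blast
qed

lemma addsub_prod_mult_left:
  "p \<in> addsub_prod B C \<Longrightarrow> x * p \<in> addsub_prod ((*) x ` B) C"
  by (induction rule: addsub_prod.induct)
    (auto simp: right_diff_distrib mult.assoc[symmetric] intro: addsub_prod.intros)

lemma addsub_prod_mult_right_nonzero:
  assumes "p \<in> addsub_prod A B" "p * c \<noteq> 0"
  obtains a b where "a \<in> A" "b \<in> B" "a * b * c \<noteq> 0"
proof -
  have "p * c = 0" if "\<forall>a\<in>A. \<forall>b\<in>B. a * b * c = 0"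
    using assms(1) that by (induction rule: addsub_prod.induct) (auto simp: left_diff_distrib)
  with assms(2) that show thesis by blast
qed

definition graded_decomposition :: "'s set \<Rightarrow> ('s \<Rightarrow> 'a::ring set) \<Rightarrow> 'a \<Rightarrow> ('s \<Rightarrow> 'a) \<Rightarrow> bool" where
  "graded_decomposition S Rs x f \<longleftrightarrow> (\<forall>s. s \<notin> S \<longrightarrow> f s = 0) \<and> (\<forall>s\<in>S. f s \<in> Rs s) \<and>
     finite {s. f s \<noteq> 0} \<and> x = (\<Sum>s\<in>{s. f s \<noteq> 0}. f s)"

locale graded_ring =
  fixes S :: "'s set" and mul :: "'s \<Rightarrow> 's \<Rightarrow> 's" and z :: 's
    and Rs :: "'s \<Rightarrow> 'a::ring set"
  assumes graded: "graded_inducing S mul z Rs"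
begin

lemma homogI: "s \<in> S \<Longrightarrow> x \<in> Rs s \<Longrightarrow> x \<in> homog S Rs"
  unfolding homog_def by blast

lemma homogE:
  assumes "x \<in> homog S Rs"
  obtains s where "s \<in> S" "x \<in> Rs s"
  using assms unfolding homog_def by blast

lemma zero_mem: "s \<in> S \<Longrightarrow> 0 \<in> Rs s"
  using graded by (simp add: graded_inducing_def)

lemma diff_mem: "s \<in> S \<Longrightarrow> x \<in> Rs s \<Longrightarrow> y \<in> Rs s \<Longrightarrow> x - y \<in> Rs s"
  using graded by (simp add: graded_inducing_def)

lemma add_mem: "s \<in> S \<Longrightarrow> x \<in> Rs s \<Longrightarrow> y \<in> Rs s \<Longrightarrow> x + y \<in> Rs s"
  using diff_closed_add[of "Rs s" x y] zero_mem diff_mem by blast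

lemma sum_mem: "finite A \<Longrightarrow> s \<in> S \<Longrightarrow> \<forall>a\<in>A. g a \<in> Rs s \<Longrightarrow> sum g A \<in> Rs s"
  by (induction A rule: finite_induct) (auto intro: add_mem zero_mem)

lemma mul_mem: "s \<in> S \<Longrightarrow> t \<in> S \<Longrightarrow> x \<in> Rs s \<Longrightarrow> y \<in> Rs t \<Longrightarrow> x * y \<in> Rs (mul s t)"
  using graded by (simp add: graded_inducing_def)

lemma mul_closed: "s \<in> S \<Longrightarrow> t \<in> S \<Longrightarrow> mul s t \<in> S"
  using graded by (simp add: graded_inducing_def)

lemma degree_neq_zero: "x \<in> Rs s \<Longrightarrow> x \<noteq> 0 \<Longrightarrow> s \<noteq> z"
  using graded by (auto simp: graded_inducing_def)

lemma graded_decomposition_ex1: "\<exists>!f. graded_decomposition S Rs x f"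
proof -
  have "\<forall>x. \<exists>!f. graded_decomposition S Rs x f"
    using graded unfolding graded_inducing_def graded_decomposition_def by (elim conjE)
  then show ?thesis ..
qed

lemma graded_decomposition_unique:
  "graded_decomposition S Rs x f \<Longrightarrow> graded_decomposition S Rs x g \<Longrightarrow> f = g"
  using graded_decomposition_ex1 by blast

lemma graded_decomposition_homog:
  assumes "s \<in> S" "x \<in> Rs s"
  shows "graded_decomposition S Rs x (\<lambda>u. if u = s then x else 0)"
proof -
  have "{u. (if u = s then x else 0) \<noteq> 0} = (if x = 0 then {} else {s})" by auto
  then show ?thesis unfolding graded_decomposition_def using assms zero_mem by auto
qed

lemma homog_degree_unique:
  assumes "p \<in> S" "q \<in> S" "x \<in> Rs p" "x \<in> Rs q" "x \<noteq> 0"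
  shows "p = q"
proof -
  have "(\<lambda>u. if u = p then x else 0) = (\<lambda>u. if u = q then x else 0)"
    using graded_decomposition_unique graded_decomposition_homog assms by blast
  then show ?thesis using assms(5) by metis
qed

lemma deg_eqI: "p \<in> S \<Longrightarrow> x \<in> Rs p \<Longrightarrow> x \<noteq> 0 \<Longrightarrow> deg S Rs x = p"
  unfolding deg_def by (rule the_equality) (auto intro: homog_degree_unique)

lemma degree_assoc:
  assumes p: "p \<in> S" and q: "q \<in> S" and r: "r \<in> S"
    and abc: "a \<in> Rs p" "b \<in> Rs q" "c \<in> Rs r" "a * b * c \<noteq> 0"
  shows "mul (mul p q) r = mul p (mul q r)"
proof -
  have "a * b * c \<in> Rs (mul (mul p q) r)"
    using mul_mem[OF mul_closed[OF p q] r mul_mem[OF p q abc(1,2)] abc(3)] .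
  moreover have "a * b * c \<in> Rs (mul p (mul q r))"
    using mul_mem[OF p mul_closed[OF q r] abc(1) mul_mem[OF q r abc(2,3)]] by (simp add: mult.assoc)
  ultimately show ?thesis
    using homog_degree_unique mul_closed[OF mul_closed[OF p q] r] mul_closed[OF p mul_closed[OF q r]] abc(4)
    by blast
qed

lemma left_factor_degree:
  assumes "p \<in> S" "s \<in> S" "a \<in> Rs p" "x \<in> Rs s" "a * x = x" "x \<noteq> 0"
  shows "mul p s = s"
  using homog_degree_unique[OF mul_closed[OF assms(1,2)] assms(2) _ assms(4,6)]
    mul_mem[OF assms(1-4)] assms(5) by simp

lemma right_factor_degree:
  assumes "p \<in> S" "s \<in> S" "a \<in> Rs p" "x \<in> Rs s" "x * a = x" "x \<noteq> 0"
  shows "mul s p = s"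
  using homog_degree_unique[OF mul_closed[OF assms(2,1)] assms(2) _ assms(4,6)]
    mul_mem[OF assms(2,1,4,3)] assms(5) by simp

lemma is_subring_idempotent_component:
  assumes "e \<in> idems S mul"
  shows "is_subring (Rs e)"
proof -
  have "e \<in> S" "mul e e = e" using assms by (auto simp: idems_def)
  then show ?thesis unfolding is_subring_def using zero_mem diff_mem mul_mem[of e e] by simp
qed

text \<open>Regrouping the sum by degree gives a decomposition of \<open>x\<close>; by uniqueness, all groups
  except the one of degree \<open>s\<close> vanish.\<close>
lemma homog_sum_component:
  assumes fin: "finite T" and hg: "\<forall>t\<in>T. h t \<in> S \<and> g t \<in> Rs (h t)"
    and s: "s \<in> S" "x \<in> Rs s" and xs: "x = sum g T"
  shows "x = sum g {t\<in>T. h t = s}"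
proof -
  define F where "F u = (if u \<in> S then sum g {t\<in>T. h t = u} else 0)" for u
  have supp: "{u. F u \<noteq> 0} \<subseteq> h ` T"
  proof
    fix u assume "u \<in> {u. F u \<noteq> 0}"
    then have "sum g {t\<in>T. h t = u} \<noteq> 0" unfolding F_def by (auto split: if_splits)
    then have "{t\<in>T. h t = u} \<noteq> {}" by (metis sum.empty)
    then show "u \<in> h ` T" by auto
  qed
  have "(\<Sum>u\<in>{u. F u \<noteq> 0}. F u) = (\<Sum>u\<in>h ` T. F u)"
    by (rule sum.mono_neutral_left) (use fin supp in auto)
  also have "\<dots> = (\<Sum>u\<in>h ` T. sum g {t\<in>T. h t = u})"
    by (rule sum.cong) (use hg F_def in auto)
  also have "\<dots> = x" using sum.image_gen[OF fin, of g h] xs by simp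
  finally have "graded_decomposition S Rs x F"
    unfolding graded_decomposition_def F_def
    using fin hg finite_subset[OF supp] by (auto intro!: sum_mem simp: F_def)
  then have "F = (\<lambda>u. if u = s then x else 0)"
    using graded_decomposition_unique graded_decomposition_homog s by blast
  then have "F s = x" by metis
  then show ?thesis using s F_def by simp
qed

lemma regular_homog_sum:
  assumes s: "s \<in> S" "x \<in> Rs s" and r: "x = x * r * x"
  obtains f T where "finite T" "T \<subseteq> S" "\<forall>t\<in>T. f t \<in> Rs t"
    "x = (\<Sum>t\<in>{t\<in>T. mul (mul s t) s = s}. x * f t * x)"
proof -
  obtain f where "graded_decomposition S Rs r f" using graded_decomposition_ex1 by blast
  then obtain T where fin: "finite T" and TS: "T \<subseteq> S" and fR: "\<forall>t\<in>T. f t \<in> Rs t"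
    and rT: "r = sum f T"
    unfolding graded_decomposition_def by (metis (mono_tags, lifting) mem_Collect_eq subsetI)
  have xsum: "x = (\<Sum>t\<in>T. x * f t * x)"
    using r unfolding rT by (simp add: sum_distrib_left sum_distrib_right)
  have "\<forall>t\<in>T. mul (mul s t) s \<in> S \<and> x * f t * x \<in> Rs (mul (mul s t) s)"
    using s TS fR by (blast intro: mul_mem mul_closed)
  then have "x = (\<Sum>t\<in>{t\<in>T. mul (mul s t) s = s}. x * f t * x)"
    by (rule homog_sum_component[OF fin _ s xsum])
  with fin TS fR show thesis by (rule that)
qed

end

locale pseudo_unitary_graded_ring = graded_ring +
  assumes pseudo_unitary: "pseudo_unitary S mul z Rs"
begin

lemma cancellative_degrees: "cancellative S mul z"
  using pseudo_unitary by (simp add: pseudo_unitary_def)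

lemma cancel_right:
  assumes "s \<in> S" "t \<in> S" "u \<in> S" "mul s u \<noteq> z" "mul s u = mul t u"
  shows "s = t"
proof -
  have "(mul s u \<noteq> z \<and> mul s u = mul t u \<or> mul u s \<noteq> z \<and> mul u s = mul u t) \<longrightarrow> s = t"
    using cancellative_degrees assms(1-3) unfolding cancellative_def by blast
  then show ?thesis using assms(4,5) by blast
qed

lemma cancel_left:
  assumes "s \<in> S" "t \<in> S" "u \<in> S" "mul u s \<noteq> z" "mul u s = mul u t"
  shows "s = t"
proof -
  have "(mul s u \<noteq> z \<and> mul s u = mul t u \<or> mul u s \<noteq> z \<and> mul u s = mul u t) \<longrightarrow> s = t"
    using cancellative_degrees assms(1-3) unfolding cancellative_def by blast
  then show ?thesis using assms(4,5) by blast
qed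

lemma homog_unities:
  assumes "x \<in> homog S Rs"
  obtains e f u v where "e \<in> idems S mul" "f \<in> idems S mul" "u \<in> Rs e" "v \<in> Rs f"
    "u * x = x" "x * v = x"
proof -
  have "\<forall>x\<in>homog S Rs. \<exists>e\<in>idems S mul. \<exists>f\<in>idems S mul. \<exists>u v.
      is_unity (Rs e) u \<and> is_unity (Rs f) v \<and> u * x = x \<and> x * v = x"
    using pseudo_unitary by (simp add: pseudo_unitary_def)
  with assms that show thesis unfolding is_unity_def by blast
qed

lemma left_unity_degree:
  assumes "s \<in> S" "x \<in> Rs s" "x \<noteq> 0"
  obtains e where "e \<in> idems S mul" "mul e s = s"
proof -
  obtain e f u v where "e \<in> idems S mul" "u \<in> Rs e" "u * x = x"
    using homog_unities[OF homogI[OF assms(1,2)]] .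
  with left_factor_degree[of e s u x] assms that show thesis by (auto simp: idems_def)
qed

lemma graded_vnr_idempotent_right_multiple:
  assumes vnr: "graded_vnr S Rs" and x: "x \<in> homog S Rs" "x \<noteq> 0"
  shows "\<exists>y\<in>homog S Rs. x * y \<noteq> 0 \<and> x * y \<in> homog S Rs \<and> deg S Rs (x * y) \<in> idems S mul"
proof -
  obtain s where s: "s \<in> S" "x \<in> Rs s" using homogE[OF x(1)] .
  obtain r where "x = x * r * x" using vnr x unfolding graded_vnr_def by blast
  then obtain f T where fT: "finite T" "T \<subseteq> S" "\<forall>t\<in>T. f t \<in> Rs t"
    and xsum: "x = (\<Sum>t\<in>{t\<in>T. mul (mul s t) s = s}. x * f t * x)"
    by (rule regular_homog_sum[OF s])
  have "\<exists>t\<in>{t\<in>T. mul (mul s t) s = s}. x * f t * x \<noteq> 0"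
  proof (rule ccontr)
    assume "\<not> ?thesis"
    then have "(\<Sum>t\<in>{t\<in>T. mul (mul s t) s = s}. x * f t * x) = 0" by (intro sum.neutral) blast
    with xsum x(2) show False by simp
  qed
  then obtain t where t: "t \<in> T" "mul (mul s t) s = s" "x * f t * x \<noteq> 0" by blast
  have tS: "t \<in> S" and y: "f t \<in> Rs t" using t fT by auto
  have stS: "mul s t \<in> S" using mul_closed[OF s(1) tS] .
  have xy: "x * f t \<in> Rs (mul s t)" "x * f t \<noteq> 0" using mul_mem[OF s(1) tS s(2) y] t(3) by auto
  obtain e where e: "e \<in> idems S mul" "mul e s = s" using left_unity_degree[OF s x(2)] .
  have "mul (mul s t) s \<noteq> z" using t(2) degree_neq_zero[OF s(2) x(2)] by simp
  then have "mul s t = e"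
    using cancel_right[OF stS _ s(1)] e t(2) by (simp add: idems_def)
  then have "deg S Rs (x * f t) \<in> idems S mul" using deg_eqI[OF stS xy] e(1) by simp
  then show ?thesis using xy homogI[OF tS y] homogI[OF stS xy(1)] by blast
qed

lemma graded_vnr_vnr_idempotent_component:
  assumes vnr: "graded_vnr S Rs" and e: "e \<in> idems S mul"
  shows "vnr_subring (Rs e)"
  unfolding vnr_subring_def
proof
  fix x assume xe: "x \<in> Rs e"
  have eS: "e \<in> S" and ee: "mul e e = e" using e by (auto simp: idems_def)
  obtain r where "x = x * r * x" using vnr homogI[OF eS xe] unfolding graded_vnr_def by blast
  then obtain f T where fT: "finite T" "T \<subseteq> S" "\<forall>t\<in>T. f t \<in> Rs t"
    and xsum: "x = (\<Sum>t\<in>{t\<in>T. mul (mul e t) e = e}. x * f t * x)"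
    by (rule regular_homog_sum[OF eS xe])
  show "\<exists>r\<in>Rs e. x = x * r * x"
  proof (cases "x = 0")
    case True
    then show ?thesis using zero_mem eS by auto
  next
    case False
    have ez: "e \<noteq> z" using degree_neq_zero[OF xe False] .
    have "{t\<in>T. mul (mul e t) e = e} \<subseteq> {e}"
    proof
      fix t assume t: "t \<in> {t\<in>T. mul (mul e t) e = e}"
      have tS: "t \<in> S" using t fT by blast
      have "mul e t = e" using cancel_right[of "mul e t" e e] t tS eS ee ez mul_closed by simp
      then show "t \<in> {e}" using cancel_left[of t e e] tS eS ee ez by simp
    qed
    moreover have "{t\<in>T. mul (mul e t) e = e} \<noteq> {}" using xsum False by (metis sum.empty)
    ultimately have "{t\<in>T. mul (mul e t) e = e} = {e}" by blast
    then show ?thesis using xsum fT by auto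
  qed
qed

end

locale strongly_graded_pseudo_unitary_ring = pseudo_unitary_graded_ring +
  assumes strongly_graded: "strongly_graded S mul Rs"
begin

lemma component_mul_eq: "s \<in> S \<Longrightarrow> t \<in> S \<Longrightarrow> Rs (mul s t) = addsub_prod (Rs s) (Rs t)"
  using strongly_graded unfolding strongly_graded_def by simp

lemma regular_if_idempotent_degree_product:
  assumes s: "s \<in> S" "x \<in> Rs s" and t: "t \<in> S" "y \<in> Rs t" and xy: "x * y \<noteq> 0"
    and e: "mul s t = e" "e \<in> idems S mul" and vnr: "vnr_subring (Rs e)"
  shows "\<exists>r. x = x * r * x"
proof -
  have eS: "e \<in> S" and ee: "mul e e = e" using e(2) by (auto simp: idems_def)
  have x0: "x \<noteq> 0" using xy by auto
  have xyR: "x * y \<in> Rs e" using mul_mem[OF s(1) t(1) s(2) t(2)] e(1) by simp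
  obtain e' f u v where e': "e' \<in> idems S mul" and f: "f \<in> idems S mul"
    and u: "u \<in> Rs e'" "u * x = x" and v: "v \<in> Rs f" "x * v = x"
    using homog_unities[OF homogI[OF s]] .
  have e'S: "e' \<in> S" and fS: "f \<in> S" using e' f by (auto simp: idems_def)
  have "u * (x * y) = x * y" using u(2) by (simp add: mult.assoc[symmetric])
  then have "mul e' e = e" using left_factor_degree[OF e'S eS u(1) xyR _ xy] by simp
  then have "e' = e" using cancel_right[OF e'S eS eS] ee degree_neq_zero[OF xyR xy] by simp
  then have uR: "u \<in> addsub_prod (Rs s) (Rs t)" using u(1) component_mul_eq[OF s(1) t(1)] e(1) by simp
  have "u * x \<noteq> 0" using u(2) x0 by simp
  then obtain a b where ab: "a \<in> Rs s" "b \<in> Rs t" "a * b * x \<noteq> 0"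
    by (rule addsub_prod_mult_right_nonzero[OF uR])
  have "mul (mul s t) s = s"
    using left_factor_degree[OF eS s(1) _ s(2) u(2) x0] u(1) \<open>e' = e\<close> e(1) by simp
  then have "mul s (mul t s) = s"
    by (rule trans[OF sym[OF degree_assoc[OF s(1) t(1) s(1) ab(1,2) s(2) ab(3)]]])
  then have "mul t s = f"
    using cancel_left[OF mul_closed[OF t(1) s(1)] fS s(1)] right_factor_degree[OF fS s(1) v(1) s(2) v(2) x0]
      degree_neq_zero[OF s(2) x0] by simp
  then have "v \<in> addsub_prod (Rs t) (Rs s)" using component_mul_eq[OF t(1) s(1)] v(1) by simp
  then have xv: "x * v \<in> addsub_prod ((*) x ` Rs t) (Rs s)" by (rule addsub_prod_mult_left)
  have "(*) x ` Rs t \<subseteq> Rs e \<inter> range ((*) x)" using mul_mem[OF s(1) t(1) s(2)] e(1) by auto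
  from vnr_idempotent_left_unit[OF is_subring_idempotent_component[OF e(2)] vnr
      is_right_ideal_principal this xv]
  obtain \<epsilon> where "\<epsilon> \<in> range ((*) x)" "\<epsilon> * (x * v) = x * v" by blast
  then obtain r where "x * r * (x * v) = x * v" by blast
  then have "x * r * x = x" using v(2) by simp
  then show ?thesis by (rule exI[of _ r, OF sym])
qed

lemma graded_vnr_if_idempotent_right_multiples:
  assumes mult: "\<forall>x\<in>homog S Rs. x \<noteq> 0 \<longrightarrow>
      (\<exists>y\<in>homog S Rs. x * y \<noteq> 0 \<and> x * y \<in> homog S Rs \<and> deg S Rs (x * y) \<in> idems S mul)"
    and vnr: "\<forall>e\<in>idems S mul. vnr_subring (Rs e)"
  shows "graded_vnr S Rs"
  unfolding graded_vnr_def
proof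
  fix x assume x: "x \<in> homog S Rs"
  show "\<exists>r. x = x * r * x"
  proof (cases "x = 0")
    case True
    then show ?thesis by simp
  next
    case False
    then obtain y where y: "y \<in> homog S Rs" "x * y \<noteq> 0" "deg S Rs (x * y) \<in> idems S mul"
      using mult x by blast
    obtain s where s: "s \<in> S" "x \<in> Rs s" using homogE[OF x] .
    obtain t where t: "t \<in> S" "y \<in> Rs t" using homogE[OF y(1)] .
    have "deg S Rs (x * y) = mul s t"
      using deg_eqI[OF mul_closed[OF s(1) t(1)] mul_mem[OF s(1) t(1) s(2) t(2)] y(2)] .
    with y(3) vnr show ?thesis
      using regular_if_idempotent_degree_product[OF s t y(2) refl] by simp
  qed
qed

end

theorem theorem4p17:
  fixes S :: "'s set" and mul :: "'s \<Rightarrow> 's \<Rightarrow> 's" and z :: 's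
    and Rs :: "'s \<Rightarrow> 'a::ring set"
  assumes "graded_inducing S mul z Rs"
    and "strongly_graded S mul Rs"
    and "pseudo_unitary S mul z Rs"
  shows "graded_vnr S Rs \<longleftrightarrow>
     ((\<forall>x\<in>homog S Rs. x \<noteq> 0 \<longrightarrow>
         (\<exists>y\<in>homog S Rs. x * y \<noteq> 0 \<and> x * y \<in> homog S Rs \<and>
             deg S Rs (x * y) \<in> idems S mul)) \<and>
      (\<forall>e\<in>idems S mul. vnr_subring (Rs e)))"
proof -
  interpret strongly_graded_pseudo_unitary_ring S mul z Rs
    by unfold_locales (rule assms)+
  show ?thesis
  proof (intro iffI conjI ballI impI)
    fix x assume "graded_vnr S Rs" "x \<in> homog S Rs" "x \<noteq> 0"
    then show "\<exists>y\<in>homog S Rs. x * y \<noteq> 0 \<and> x * y \<in> homog S Rs \<and> deg S Rs (x * y) \<in> idems S mul"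
      by (rule graded_vnr_idempotent_right_multiple)
  next
    fix e assume "graded_vnr S Rs" "e \<in> idems S mul"
    then show "vnr_subring (Rs e)" by (rule graded_vnr_vnr_idempotent_component)
  next
    assume "(\<forall>x\<in>homog S Rs. x \<noteq> 0 \<longrightarrow>
        (\<exists>y\<in>homog S Rs. x * y \<noteq> 0 \<and> x * y \<in> homog S Rs \<and> deg S Rs (x * y) \<in> idems S mul)) \<and>
      (\<forall>e\<in>idems S mul. vnr_subring (Rs e))"
    then show "graded_vnr S Rs" using graded_vnr_if_idempotent_right_multiples by blast
  qed
qed

end
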